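(* Let $n\in\mathbb{N}$ and let $k=k(n)$ be a positive integer with $k(n)\to\infty$ as $n\to\infty$. Generate $n$ binary strings $\mathbf{s}_1,\dots,\mathbf{s}_n$, each of length $k$, independently and uniformly at random. For a fixed $i$ and each $j\neq i$, let $X_{ij}$ be the number of bits of $\mathbf{s}_j$ read when $\mathbf{s}_j$ is compared with $\mathbf{s}_i$ by reading bit-by-bit from left to right until the first position where $\mathbf{s}_j$ differs from $\mathbf{s}_i$ (inclusive of that position); if $\mathbf{s}_j=\mathbf{s}_i$ then all $k$ bits are read. Let $X_i=\sum_{j\neq i}X_{ij}$ and $X=\max_i X_i$. Then $X\lesssim 2n$, i.e. for all $\varepsilon_1,\varepsilon_2>0$ and all sufficiently large $n$, $\mathbb{P}\left(\frac{X}{2n}<1+\varepsilon_1\right)>1-\varepsilon_2$. *)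

theory Defs
  imports "HOL-Probability.Probability_Mass_Function"
begin

text \<open>A binary string of length k is a function from positions {..<k} to bool
  (extensional, i.e. undefined outside). A configuration of n strings is a
  function from indices {..<n} to strings.\<close>

definition bin_strings :: "nat \<Rightarrow> (nat \<Rightarrow> bool) set" where
  "bin_strings k = PiE {..<k} (\<lambda>_. UNIV)"

definition configs :: "nat \<Rightarrow> nat \<Rightarrow> (nat \<Rightarrow> nat \<Rightarrow> bool) set" where
  "configs n k = PiE {..<n} (\<lambda>_. bin_strings k)"

definition bits_read :: "nat \<Rightarrow> (nat \<Rightarrow> bool) \<Rightarrow> (nat \<Rightarrow> bool) \<Rightarrow> nat" where
  "bits_read k s t = (if \<forall>p<k. t p = s p then k else Suc (LEAST p. p < k \<and> t p \<noteq> s p))"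

definition X_i :: "nat \<Rightarrow> nat \<Rightarrow> (nat \<Rightarrow> nat \<Rightarrow> bool) \<Rightarrow> nat \<Rightarrow> nat" where
  "X_i n k S i = (\<Sum>j\<in>{..<n} - {i}. bits_read k (S i) (S j))"

definition X_max :: "nat \<Rightarrow> nat \<Rightarrow> (nat \<Rightarrow> nat \<Rightarrow> bool) \<Rightarrow> nat" where
  "X_max n k S = Max ((X_i n k S) ` {..<n})"

end

theory Submission
  imports Defs
begin

text \<open>
  Compared with a fixed string, the number of bits read from a uniformly random string is
  dominated by a geometric variable with parameter 1/2, so its exponential moment at base
  \<open>1 < a < 2\<close> is at most \<open>c = a / (2 - a)\<close>. Given \<open>s\<^sub>i\<close>, the other \<open>n - 1\<close> strings are
  independent, so Markov's inequality gives \<open>P(X\<^sub>i \<ge> T) \<le> c ^ (n - 1) / a powr T\<close>.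
  Since \<open>c \<approx> 1 + 2(a - 1)\<close> near \<open>a = 1\<close>, some \<open>a\<close> satisfies \<open>c < a powr (2 + 2\<epsilon>)\<close>; with
  \<open>T = 2n(1 + \<epsilon>)\<close> the union bound over \<open>i\<close> then bounds the failure probability by
  \<open>n r ^ n\<close> for some \<open>r < 1\<close>.
\<close>

lemma bits_read_le: "bits_read k s t \<le> k"
proof (cases "\<forall>p<k. t p = s p")
  case False
  then obtain p where p: "p < k" "t p \<noteq> s p" by auto
  have "(LEAST p. p < k \<and> t p \<noteq> s p) < k"
    using LeastI[of "\<lambda>p. p < k \<and> t p \<noteq> s p" p] p by auto
  then show ?thesis using False by (simp add: bits_read_def)
qed (simp add: bits_read_def)

lemma less_bits_read_iff:
  assumes "p < k"
  shows "p < bits_read k s t \<longleftrightarrow> (\<forall>q<p. t q = s q)"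
proof (cases "\<forall>p<k. t p = s p")
  case True
  then show ?thesis using assms by (simp add: bits_read_def)
next
  case False
  then obtain p0 where p0: "p0 < k" "t p0 \<noteq> s p0" by auto
  define m where "m = (LEAST p. p < k \<and> t p \<noteq> s p)"
  have m: "m < k" "t m \<noteq> s m"
    using LeastI[of "\<lambda>p. p < k \<and> t p \<noteq> s p" p0] p0 unfolding m_def by auto
  have agree: "t q = s q" if "q < m" for q
    using not_less_Least[of q "\<lambda>p. p < k \<and> t p \<noteq> s p"] m(1) that unfolding m_def by auto
  have "bits_read k s t = Suc m"
    by (simp only: bits_read_def m_def if_not_P[OF False])
  then show ?thesis using agree m(2) by (auto simp: less_Suc_eq_le) (meson leI)+
qed

lemma lessThan_bits_read:
  "{..<bits_read k s t} = {p. p < k \<and> (\<forall>q<p. t q = s q)}"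
  using bits_read_le[of k s t] less_bits_read_iff[of _ k s t]
  by (auto intro: order_less_le_trans)

lemma power_bits_read:
  fixes a :: "'a::comm_ring_1"
  shows "a ^ bits_read k s t = 1 + (a - 1) * (\<Sum>p<k. if \<forall>q<p. t q = s q then a ^ p else 0)"
proof -
  have "(\<Sum>p<k. if \<forall>q<p. t q = s q then a ^ p else 0) = (\<Sum>p<bits_read k s t. a ^ p)"
    by (simp add: sum.inter_filter[symmetric] lessThan_bits_read[symmetric])
  then show ?thesis
    using power_diff_1_eq[of a "bits_read k s t"] by (simp add: algebra_simps)
qed

lemma finite_bin_strings: "finite (bin_strings k)"
  unfolding bin_strings_def by (intro finite_PiE) auto

lemma card_bin_strings: "card (bin_strings k) = 2 ^ k"
  unfolding bin_strings_def by (simp add: card_PiE)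

lemma card_bin_strings_prefix:
  assumes "p \<le> k"
  shows "card {t \<in> bin_strings k. \<forall>q<p. t q = s q} = 2 ^ (k - p)"
proof -
  have "{t \<in> bin_strings k. \<forall>q<p. t q = s q} = PiE {..<k} (\<lambda>q. if q < p then {s q} else UNIV)"
    using assms unfolding bin_strings_def by (auto simp: PiE_def Pi_def)
  then have "card {t \<in> bin_strings k. \<forall>q<p. t q = s q} = (\<Prod>q<k. card (if q < p then {s q} else UNIV))"
    by (simp add: card_PiE)
  also have "\<dots> = (\<Prod>q<k. if q < p then 1 else 2)"
    by (intro prod.cong) auto
  also have "\<dots> = (\<Prod>q\<in>{..<k} \<inter> - {q. q < p}. 2)"
    by (simp add: prod.If_cases)
  also have "{..<k} \<inter> - {q. q < p} = {p..<k}"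
    by auto
  finally show ?thesis by simp
qed

lemma finite_configs: "finite (configs n k)"
  unfolding configs_def by (intro finite_PiE finite_bin_strings) auto

lemma card_configs: "card (configs n k) = (2 ^ k) ^ n"
  unfolding configs_def by (simp add: card_PiE card_bin_strings)

lemma sum_power_bits_read:
  "(\<Sum>t\<in>bin_strings k. (a::real) ^ bits_read k s t) = 2 ^ k * (1 + (a - 1) * (\<Sum>p<k. (a / 2) ^ p))"
proof -
  let ?B = "bin_strings k"
  have prefix: "(\<Sum>t\<in>?B. if \<forall>q<p. t q = s q then a ^ p else 0) = 2 ^ k * (a / 2) ^ p"
    if "p < k" for p
  proof -
    have "(\<Sum>t\<in>?B. if \<forall>q<p. t q = s q then a ^ p else 0) = a ^ p * 2 ^ (k - p)"
      using finite_bin_strings card_bin_strings_prefix[of p k s] that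
      by (simp add: sum.inter_filter[symmetric])
    also have "\<dots> = 2 ^ k * (a / 2) ^ p"
      using that by (simp add: power_diff power_divide field_simps)
    finally show ?thesis .
  qed
  have "(\<Sum>t\<in>?B. a ^ bits_read k s t)
      = real (card ?B) + (a - 1) * (\<Sum>p<k. \<Sum>t\<in>?B. if \<forall>q<p. t q = s q then a ^ p else 0)"
    by (simp add: power_bits_read sum.distrib sum_distrib_left sum.swap[of _ ?B])
  also have "\<dots> = 2 ^ k * (1 + (a - 1) * (\<Sum>p<k. (a / 2) ^ p))"
    by (simp add: prefix card_bin_strings sum_distrib_left algebra_simps)
  finally show ?thesis .
qed

lemma sum_power_bits_read_le:
  assumes "1 \<le> a" "a < 2"
  shows "(\<Sum>t\<in>bin_strings k. (a::real) ^ bits_read k s t) \<le> 2 ^ k * (a / (2 - a))"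
proof -
  have "(\<Sum>p<k. (a / 2) ^ p) \<le> 1 / (1 - a / 2)"
    using assms geometric_sum_less[of "a / 2" "{..<k}"] by simp
  then have "1 + (a - 1) * (\<Sum>p<k. (a / 2) ^ p) \<le> 1 + (a - 1) * (1 / (1 - a / 2))"
    using assms by (intro add_left_mono mult_left_mono) auto
  also have "\<dots> = a / (2 - a)"
    using assms by (simp add: field_simps)
  finally have "2 ^ k * (1 + (a - 1) * (\<Sum>p<k. (a / 2) ^ p)) \<le> 2 ^ k * (a / (2 - a))"
    by (rule mult_left_mono) simp
  then show ?thesis
    by (simp only: sum_power_bits_read)
qed

lemma sum_power_X_i_le:
  assumes "i < n" "1 \<le> a" "a < 2"
  shows "(\<Sum>S\<in>configs n k. (a::real) ^ X_i n k S i) \<le> 2 ^ k * (2 ^ k * (a / (2 - a))) ^ (n - 1)"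
proof -
  let ?B = "bin_strings k"
  define A where "A = {..<n} - {i}"
  have A: "i \<notin> A" "{..<n} = insert i A" "finite A" "card A = n - 1"
    using assms(1) by (auto simp: A_def)
  have configs_eq: "configs n k = (\<lambda>(y, g). g(i := y)) ` (?B \<times> PiE A (\<lambda>_. ?B))"
    unfolding configs_def A(2) by (rule PiE_insert_eq)
  have "(\<Sum>S\<in>configs n k. a ^ X_i n k S i)
      = (\<Sum>(y, g)\<in>?B \<times> PiE A (\<lambda>_. ?B). \<Prod>j\<in>A. a ^ bits_read k y (g j))"
    unfolding configs_eq X_i_def A_def[symmetric] power_sum using inj_combinator[OF A(1)] A(1)
    by (subst sum.reindex) (auto intro!: sum.cong prod.cong)
  also have "\<dots> = (\<Sum>y\<in>?B. \<Prod>j\<in>A. \<Sum>t\<in>?B. a ^ bits_read k y t)"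
    using A(3) finite_bin_strings
    by (simp only: sum.cartesian_product[symmetric] prod_sum_PiE)
  also have "\<dots> \<le> (\<Sum>y\<in>?B. \<Prod>j\<in>A. 2 ^ k * (a / (2 - a)))"
    using assms by (intro sum_mono prod_mono conjI sum_power_bits_read_le sum_nonneg) auto
  also have "\<dots> = 2 ^ k * (2 ^ k * (a / (2 - a))) ^ (n - 1)"
    by (simp add: A(4) card_bin_strings)
  finally show ?thesis .
qed

lemma card_X_i_ge_le:
  assumes "i < n" "1 < a" "a < 2"
  shows "real (card {S\<in>configs n k. T \<le> real (X_i n k S i)})
           \<le> 2 ^ k * (2 ^ k * (a / (2 - a))) ^ (n - 1) / a powr T"
proof -
  let ?E = "{S\<in>configs n k. T \<le> real (X_i n k S i)}"
  have "real (card ?E) * a powr T = (\<Sum>S\<in>?E. a powr T)" by simp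
  also have "\<dots> \<le> (\<Sum>S\<in>?E. a ^ X_i n k S i)"
    using assms by (intro sum_mono) (auto simp: powr_realpow[symmetric] intro: powr_mono)
  also have "\<dots> \<le> (\<Sum>S\<in>configs n k. a ^ X_i n k S i)"
    using assms finite_configs by (intro sum_mono2) auto
  also have "\<dots> \<le> 2 ^ k * (2 ^ k * (a / (2 - a))) ^ (n - 1)"
    using assms by (intro sum_power_X_i_le) auto
  finally show ?thesis
    using assms by (simp add: field_simps)
qed

lemma X_max_ge_imp_ex_X_i_ge:
  assumes "0 < n" "T \<le> real (X_max n k S)"
  shows "\<exists>i<n. T \<le> real (X_i n k S i)"
proof -
  have "X_max n k S \<in> X_i n k S ` {..<n}"
    unfolding X_max_def using assms(1) by (intro Max_in) auto
  then show ?thesis using assms(2) by auto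
qed

lemma prob_X_max_ge_le:
  assumes "0 < n" "1 < a" "a < 2"
  shows "measure_pmf.prob (pmf_of_set (configs n k)) {S. T \<le> real (X_max n k S)}
           \<le> real n * (a / (2 - a)) ^ (n - 1) / a powr T"
proof -
  let ?C = "configs n k"
  let ?E = "\<lambda>i. {S\<in>?C. T \<le> real (X_i n k S i)}"
  have "?C \<noteq> {}"
    using card_configs[of n k] by (metis card.empty power_not_zero zero_neq_numeral)
  then have "measure_pmf.prob (pmf_of_set ?C) {S. T \<le> real (X_max n k S)}
      = real (card {S\<in>?C. T \<le> real (X_max n k S)}) / real (card ?C)"
    using finite_configs by (simp add: measure_pmf_of_set Int_def)
  also have "\<dots> \<le> (\<Sum>i<n. real (card (?E i))) / real (card ?C)"
  proof (intro divide_right_mono)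
    have "card {S\<in>?C. T \<le> real (X_max n k S)} \<le> card (\<Union>i<n. ?E i)"
      using finite_configs by (intro card_mono) (auto dest!: X_max_ge_imp_ex_X_i_ge[OF assms(1)])
    also have "\<dots> \<le> (\<Sum>i<n. card (?E i))" by (rule card_UN_le) auto
    finally show "real (card {S\<in>?C. T \<le> real (X_max n k S)}) \<le> (\<Sum>i<n. real (card (?E i)))"
      by (simp flip: of_nat_sum)
  qed auto
  also have "\<dots> \<le> (\<Sum>i<n. 2 ^ k * (2 ^ k * (a / (2 - a))) ^ (n - 1) / a powr T) / real (card ?C)"
    using assms by (intro divide_right_mono sum_mono card_X_i_ge_le) auto
  also have "\<dots> = real n * (a / (2 - a)) ^ (n - 1) / a powr T"
    using assms by (cases n) (simp_all add: card_configs power_mult_distrib field_simps)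
  finally show ?thesis .
qed

lemma prob_X_max_ratio_ge_le:
  assumes "0 < n" "1 < a" "a < 2"
  shows "measure_pmf.prob (pmf_of_set (configs n k))
      {S. \<not> real (X_max n k S) / (2 * real n) < 1 + \<epsilon>}
     \<le> real n * (a / (2 - a) / a powr (2 + 2 * \<epsilon>)) ^ n"
proof -
  define c where "c = a / (2 - a)"
  have "1 \<le> c" using assms by (simp add: c_def field_simps)
  have "{S. \<not> real (X_max n k S) / (2 * real n) < 1 + \<epsilon>}
      = {S. real n * (2 + 2 * \<epsilon>) \<le> real (X_max n k S)}"
    using assms(1) by (auto simp: field_simps)
  then have "measure_pmf.prob (pmf_of_set (configs n k))
      {S. \<not> real (X_max n k S) / (2 * real n) < 1 + \<epsilon>}
      \<le> real n * c ^ (n - 1) / a powr (real n * (2 + 2 * \<epsilon>))"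
    using prob_X_max_ge_le[OF assms(1-3)] by (simp add: c_def)
  also have "a powr (real n * (2 + 2 * \<epsilon>)) = (a powr (2 + 2 * \<epsilon>)) ^ n"
    using assms by (simp add: powr_powr powr_realpow[symmetric] mult.commute)
  also have "real n * c ^ (n - 1) / \<dots> \<le> real n * c ^ n / (a powr (2 + 2 * \<epsilon>)) ^ n"
    using \<open>1 \<le> c\<close> by (intro divide_right_mono mult_left_mono power_increasing) auto
  finally show ?thesis by (simp add: c_def power_divide power_mult_distrib)
qed

lemma ex_base_ratio_less_powr:
  assumes "0 < (\<epsilon>::real)"
  shows "\<exists>a. 1 < a \<and> a < 2 \<and> a / (2 - a) < a powr (2 + 2 * \<epsilon>)"
proof -
  define f where "f x = x powr (2 + 2 * \<epsilon>) * (2 - x) - x" for x :: real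
  have "DERIV f 1 :> 2 * \<epsilon>"
    unfolding f_def by (rule derivative_eq_intros refl | simp)+
  then obtain d where d: "d > 0" "\<And>h. 0 < h \<Longrightarrow> h < d \<Longrightarrow> f 1 < f (1 + h)"
    using DERIV_pos_inc_right assms by (metis mult_pos_pos zero_less_numeral)
  define h where "h = min (d / 2) (1 / 2)"
  have h: "0 < h" "h < d" "h < 1" using d by (auto simp: h_def)
  then have "1 + h < (1 + h) powr (2 + 2 * \<epsilon>) * (1 - h)"
    using d(2)[of h] by (simp add: f_def)
  then show ?thesis
    using h by (intro exI[of _ "1 + h"]) (simp add: field_simps)
qed

text \<open>The bound holds uniformly in the string length.\<close>

theorem lemma2p2:
  fixes k :: "nat \<Rightarrow> nat" and \<epsilon>1 \<epsilon>2 :: real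
  assumes "\<And>n. k n > 0"
    and "filterlim k at_top at_top"
    and "\<epsilon>1 > 0" and "\<epsilon>2 > 0"
  shows "\<forall>\<^sub>F n in at_top.
    measure_pmf.prob (pmf_of_set (configs n (k n)))
      {S. real (X_max n (k n) S) / (2 * real n) < 1 + \<epsilon>1} > 1 - \<epsilon>2"
proof -
  obtain a where a: "1 < a" "a < 2" "a / (2 - a) < a powr (2 + 2 * \<epsilon>1)"
    using ex_base_ratio_less_powr[OF assms(3)] by blast
  define r where "r = a / (2 - a) / a powr (2 + 2 * \<epsilon>1)"
  have "0 < r" "r < 1" using a by (auto simp: r_def field_simps)
  then have "(\<lambda>n. real n * r ^ n) \<longlonglongrightarrow> 0"
    by (intro powser_times_n_limit_0) simp
  then have "\<forall>\<^sub>F n in at_top. real n * r ^ n < \<epsilon>2"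
    using assms(4) by (rule order_tendstoD(2))
  then show ?thesis
    using eventually_gt_at_top[of 0]
  proof eventually_elim
    case (elim n)
    let ?M = "pmf_of_set (configs n (k n))"
    let ?G = "{S. real (X_max n (k n) S) / (2 * real n) < 1 + \<epsilon>1}"
    have "1 - measure_pmf.prob ?M ?G = measure_pmf.prob ?M (- ?G)"
      using measure_pmf.prob_compl[of ?G ?M] by (simp add: Compl_eq_Diff_UNIV)
    also have "\<dots> \<le> real n * r ^ n"
      using prob_X_max_ratio_ge_le[OF elim(2) a(1,2)] by (simp add: r_def Compl_eq)
    finally show ?case using elim(1) by linarith
  qed
qed

end
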